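(* Let $b\ge 1$ be an integer and let $a_1<a_2<\dots<a_l$ be integers such that $a_{i+1}-a_i\le b$ for all $1\le i<l$. Set $A=\{a_1,a_2,\dots,a_l\}$. Then for every integer $n>2b^2$, \[ nA=(n-2b^2)\{a_1,a_l\}+2b^2A. \]
   Context: For a subset $A$ of an abelian group and a positive integer $n$, $nA=A+A+\dots+A$ ($n$ summands) denotes the $n$-fold sumset $\{c_1+\dots+c_n : c_i\in A\}$ (repetitions allowed); sums of sets are Minkowski sums $X+Y=\{x+y: x\in X, y\in Y\}$. *)

theory Defs
  imports Main
begin

definition msum :: "int set \<Rightarrow> int set \<Rightarrow> int set" where
  "msum X Y = {x + y | x y. x \<in> X \<and> y \<in> Y}"

fun nfold :: "nat \<Rightarrow> int set \<Rightarrow> int set" where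
  "nfold 0 A = {0}"
| "nfold (Suc n) A = msum A (nfold n A)"

end

theory Submission
  imports Defs "HOL-Library.FuncSet"
begin

text \<open>Write an element of \<open>(k+1)A\<close>, \<open>k \<ge> 2b\<^sup>2\<close>, as a sum of \<open>k+1\<close> summands from \<open>A\<close>,
choosing the representation with the largest sum of squares. If no summand were an endpoint of
\<open>A\<close>, every summand could move down and up within \<open>A\<close> by steps in \<open>{1..b}\<close>. Among the
\<open>b\<^sup>2\<close> smallest summands some \<open>b\<close> share a down-step \<open>d\<close>, among the others some \<open>b\<close> share an
up-step \<open>e\<close>; lowering \<open>e\<close> of the former by \<open>d\<close> and raising \<open>d\<close> of the latter by \<open>e\<close> keeps
the sum but increases the sum of squares. So some summand is \<open>min A\<close> or \<open>max A\<close>, i.e.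
\<open>(k+1)A \<subseteq> {min A, max A} + kA\<close>, and iterating gives the theorem.\<close>

lemma msum_mono: "X \<subseteq> X' \<Longrightarrow> Y \<subseteq> Y' \<Longrightarrow> msum X Y \<subseteq> msum X' Y'"
  unfolding msum_def by blast

lemma msum_assoc: "msum X (msum Y Z) = msum (msum X Y) Z"
  unfolding msum_def by auto (metis add.assoc)+

lemma msum_zero_left [simp]: "msum {0} Y = Y"
  unfolding msum_def by auto

lemma nfold_add: "nfold (p + q) A = msum (nfold p A) (nfold q A)"
  by (induction p) (simp_all add: msum_assoc)

lemma nfold_mono: "E \<subseteq> A \<Longrightarrow> nfold p E \<subseteq> nfold p A"
  by (induction p) (simp_all add: msum_mono)

lemma sum_in_nfold:
  assumes "finite S" "\<And>i. i \<in> S \<Longrightarrow> c i \<in> A"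
  shows "sum c S \<in> nfold (card S) A"
  using assms by (induction S rule: finite_induct) (auto simp: msum_def)

lemma nfold_obtain_sum:
  assumes "x \<in> nfold n A"
  obtains c where "\<And>i. i < n \<Longrightarrow> c i \<in> A" "x = (\<Sum>i<n. c i)"
  using assms
proof (induction n arbitrary: x thesis)
  case 0
  then show ?case by simp
next
  case (Suc n)
  then obtain y z where y: "y \<in> A" and z: "z \<in> nfold n A" and x: "x = y + z"
    by (auto simp: msum_def)
  obtain c where c: "\<And>i. i < n \<Longrightarrow> c i \<in> A" and "z = (\<Sum>i<n. c i)"
    using Suc.IH[OF _ z] by blast
  moreover have "(\<Sum>i<n. (c(n := y)) i) = (\<Sum>i<n. c i)"
    by (intro sum.cong) auto
  ultimately have "x = (\<Sum>i<Suc n. (c(n := y)) i)"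
    by (simp add: x)
  moreover have "(c(n := y)) i \<in> A" if "i < Suc n" for i
    using that c y by (auto simp: less_Suc_eq)
  ultimately show ?case using Suc.prems(1) by blast
qed

lemma ex_subset_card_below_rest:
  fixes c :: "'a \<Rightarrow> 'b::linorder"
  assumes "finite S" "p \<le> card S"
  shows "\<exists>L\<subseteq>S. card L = p \<and> (\<forall>i\<in>L. \<forall>j\<in>S - L. c i \<le> c j)"
  using assms(2)
proof (induction p)
  case 0
  then show ?case by auto
next
  case (Suc p)
  then obtain L where L: "L \<subseteq> S" "card L = p" "\<forall>i\<in>L. \<forall>j\<in>S - L. c i \<le> c j"
    by auto
  have finL: "finite L" using L(1) assms(1) finite_subset by blast
  have "S - L \<noteq> {}"
    using Suc.prems L(1,2) card_mono[OF finL, of S] by auto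
  then have "Min (c ` (S - L)) \<in> c ` (S - L)"
    using assms(1) by simp
  then obtain j0 where j0: "j0 \<in> S - L" "c j0 = Min (c ` (S - L))"
    by auto
  then have "\<forall>j\<in>S - L. c j0 \<le> c j" using assms(1) by auto
  then have "\<forall>i\<in>insert j0 L. \<forall>j\<in>S - insert j0 L. c i \<le> c j" using L(3) by auto
  moreover have "card (insert j0 L) = Suc p" using j0 finL L(2) by simp
  ultimately show ?case using j0 L(1) by blast
qed

lemma ex_large_fibre:
  assumes "finite S" "f ` S \<subseteq> {1..b}" "0 < b" "b * b \<le> card S"
  shows "\<exists>d\<in>{1..b}. b \<le> card (f -` {d} \<inter> S)"
proof -
  obtain d where "d \<in> {1..b}" "card S \<le> card (f -` {d} \<inter> S) * b"
    using pigeonhole_card[of f S "{1..b}"] assms(1-3) by (auto simp: image_subset_iff_funcset)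
  then show ?thesis using assms(3,4) by (metis le_trans mult_le_cancel2)
qed

lemma square_le_sum_squares_bounds:
  fixes u :: "'a::linordered_idom"
  assumes "lo \<le> u" "u \<le> hi"
  shows "u\<^sup>2 \<le> lo\<^sup>2 + hi\<^sup>2"
proof (cases "0 \<le> u")
  case True
  then have "u\<^sup>2 \<le> hi\<^sup>2" using assms(2) by (intro power_mono) auto
  then show ?thesis by (simp add: add_increasing)
next
  case False
  then have "(- u)\<^sup>2 \<le> (- lo)\<^sup>2" using assms(1) by (intro power_mono) auto
  then show ?thesis by (simp add: add_increasing2)
qed

definition exchange :: "'a set \<Rightarrow> 'a set \<Rightarrow> nat \<Rightarrow> nat \<Rightarrow> ('a \<Rightarrow> int) \<Rightarrow> 'a \<Rightarrow> int" where
  "exchange I J d e c i = (if i \<in> I then c i - int d else if i \<in> J then c i + int e else c i)"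

lemma exchange_sum_sum_squares:
  fixes c :: "'a \<Rightarrow> int" and d e :: nat
  assumes "finite S" "I \<subseteq> S" "J \<subseteq> S" "I \<inter> J = {}"
    and "card I = e" "card J = d" "0 < d" "0 < e"
    and below: "\<And>i j. i \<in> I \<Longrightarrow> j \<in> J \<Longrightarrow> c i \<le> c j"
  shows "sum (exchange I J d e c) S = sum c S"
    and "(\<Sum>i\<in>S. (c i)\<^sup>2) < (\<Sum>i\<in>S. (exchange I J d e c i)\<^sup>2)"
proof -
  define c' where "c' = exchange I J d e c"
  have finIJ: "finite I" "finite J" using assms(1-3) finite_subset by auto
  have split: "sum f S = sum f (S - (I \<union> J)) + sum f I + sum f J" for f :: "'a \<Rightarrow> int"
    using assms(1-4) finIJ by (simp add: sum.subset_diff[of "I \<union> J" S] sum.union_disjoint)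
  have rest: "sum g (S - (I \<union> J)) = sum f (S - (I \<union> J))"
    if "\<And>i. i \<notin> I \<Longrightarrow> i \<notin> J \<Longrightarrow> g i = f i" for f g :: "'a \<Rightarrow> int"
    using that by (intro sum.cong) auto
  have onI: "c' i = c i - int d" if "i \<in> I" for i using that by (simp add: c'_def exchange_def)
  have onJ: "c' j = c j + int e" if "j \<in> J" for j using that assms(4) by (auto simp: c'_def exchange_def)
  have "sum c' I = sum c I - int e * int d" "sum c' J = sum c J + int d * int e"
    using assms(5,6) by (simp_all add: onI onJ sum_subtractf sum.distrib)
  moreover have "sum c' (S - (I \<union> J)) = sum c (S - (I \<union> J))"
    by (rule rest) (simp add: c'_def exchange_def)
  ultimately show "sum (exchange I J d e c) S = sum c S" using split[of c'] split[of c] by (simp add: c'_def)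
  have "int d * sum c I = (\<Sum>i\<in>I. \<Sum>j\<in>J. c i)"
    using assms(6) by (simp add: sum_distrib_left mult.commute)
  also have "\<dots> \<le> (\<Sum>i\<in>I. \<Sum>j\<in>J. c j)" by (intro sum_mono) (simp add: below)
  also have "\<dots> = int e * sum c J" using assms(5) by simp
  finally have balance: "int d * sum c I \<le> int e * sum c J" .
  have "(\<Sum>i\<in>I. (c' i)\<^sup>2) = (\<Sum>i\<in>I. (c i)\<^sup>2) - 2 * int d * sum c I + int e * (int d)\<^sup>2"
    using assms(5)
    by (simp add: onI power2_diff sum.distrib sum_subtractf sum_distrib_left sum_distrib_right mult_ac)
  moreover have "(\<Sum>j\<in>J. (c' j)\<^sup>2) = (\<Sum>j\<in>J. (c j)\<^sup>2) + 2 * int e * sum c J + int d * (int e)\<^sup>2"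
    using assms(6)
    by (simp add: onJ power2_sum sum.distrib sum_distrib_left sum_distrib_right mult_ac)
  moreover have "(\<Sum>i\<in>S - (I \<union> J). (c' i)\<^sup>2) = (\<Sum>i\<in>S - (I \<union> J). (c i)\<^sup>2)"
    by (rule rest) (simp add: c'_def exchange_def)
  moreover have "0 < int e * (int d)\<^sup>2 + int d * (int e)\<^sup>2"
    using assms(7,8) by (simp add: add_pos_pos)
  ultimately show "(\<Sum>i\<in>S. (c i)\<^sup>2) < (\<Sum>i\<in>S. (exchange I J d e c i)\<^sup>2)"
    unfolding c'_def[symmetric] using split[of "\<lambda>i. (c i)\<^sup>2"] split[of "\<lambda>i. (c' i)\<^sup>2"] balance by linarith
qed

locale bounded_gaps =
  fixes A :: "int set" and lo hi :: int and b :: nat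
  assumes subset_bounds: "A \<subseteq> {lo..hi}"
    and step_down: "\<And>u. u \<in> A \<Longrightarrow> u \<noteq> lo \<Longrightarrow> \<exists>v\<in>A. v < u \<and> u - v \<le> int b"
    and step_up: "\<And>u. u \<in> A \<Longrightarrow> u \<noteq> hi \<Longrightarrow> \<exists>v\<in>A. u < v \<and> v - u \<le> int b"
begin

lemma obtain_down_steps:
  assumes "\<And>i. i \<in> S \<Longrightarrow> c i \<in> A - {lo}"
  obtains D where "\<And>i. i \<in> S \<Longrightarrow> D i \<in> {1..b} \<and> c i - int (D i) \<in> A"
proof -
  have "\<forall>i\<in>S. \<exists>d\<in>{1..b}. c i - int d \<in> A"
  proof
    fix i assume "i \<in> S"
    then obtain v where "v \<in> A" "v < c i" "c i - v \<le> int b" using step_down assms by blast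
    then show "\<exists>d\<in>{1..b}. c i - int d \<in> A" by (intro bexI[of _ "nat (c i - v)"]) auto
  qed
  then show ?thesis using that by (metis bchoice)
qed

lemma obtain_up_steps:
  assumes "\<And>i. i \<in> S \<Longrightarrow> c i \<in> A - {hi}"
  obtains U where "\<And>i. i \<in> S \<Longrightarrow> U i \<in> {1..b} \<and> c i + int (U i) \<in> A"
proof -
  have "\<forall>i\<in>S. \<exists>e\<in>{1..b}. c i + int e \<in> A"
  proof
    fix i assume "i \<in> S"
    then obtain v where "v \<in> A" "c i < v" "v - c i \<le> int b" using step_up assms by blast
    then show "\<exists>e\<in>{1..b}. c i + int e \<in> A" by (intro bexI[of _ "nat (v - c i)"]) auto
  qed
  then show ?thesis using that by (metis bchoice)
qed

lemma ex_same_sum_larger_sum_squares: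
  fixes c :: "nat \<Rightarrow> int"
  assumes k: "2 * b\<^sup>2 < k" and c: "\<And>i. i < k \<Longrightarrow> c i \<in> A - {lo, hi}"
  shows "\<exists>c'. (\<forall>i<k. c' i \<in> A) \<and> (\<Sum>i<k. c' i) = (\<Sum>i<k. c i)
               \<and> (\<Sum>i<k. (c i)\<^sup>2) < (\<Sum>i<k. (c' i)\<^sup>2)"
proof -
  obtain D where D: "\<And>i. i \<in> {..<k} \<Longrightarrow> D i \<in> {1..b} \<and> c i - int (D i) \<in> A"
    using obtain_down_steps[of "{..<k}" c] c by blast
  obtain U where U: "\<And>i. i \<in> {..<k} \<Longrightarrow> U i \<in> {1..b} \<and> c i + int (U i) \<in> A"
    using obtain_up_steps[of "{..<k}" c] c by blast
  have "0 < b" using D[of 0] k by auto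
  have "b * b \<le> card {..<k}" using k by (simp add: power2_eq_square)
  then obtain L where L: "L \<subseteq> {..<k}" "card L = b * b" "\<forall>i\<in>L. \<forall>j\<in>{..<k} - L. c i \<le> c j"
    using ex_subset_card_below_rest[of "{..<k}" "b * b" c] by auto
  define H where "H = {..<k} - L"
  have "b * b \<le> card H"
    using L(1,2) k finite_subset[OF L(1)] by (simp add: H_def card_Diff_subset power2_eq_square)
  have "D ` L \<subseteq> {1..b}" "U ` H \<subseteq> {1..b}"
    using D U L(1) by (auto simp: H_def)
  moreover have "finite L" "finite H" using finite_subset[OF L(1)] by (simp_all add: H_def)
  ultimately obtain d e where d: "d \<in> {1..b}" "b \<le> card (D -` {d} \<inter> L)"
    and e: "e \<in> {1..b}" "b \<le> card (U -` {e} \<inter> H)"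
    using ex_large_fibre[of L D b] ex_large_fibre[of H U b] L(2) \<open>0 < b\<close> \<open>b * b \<le> card H\<close>
    by (metis order.refl)
  have "e \<le> card (D -` {d} \<inter> L)" "d \<le> card (U -` {e} \<inter> H)"
    using d e by simp_all
  then obtain I J where I: "I \<subseteq> D -` {d} \<inter> L" "card I = e"
    and J: "J \<subseteq> U -` {e} \<inter> H" "card J = d"
    by (metis obtain_subset_with_card_n)
  have IJ: "I \<subseteq> {..<k}" "J \<subseteq> {..<k}" "I \<inter> J = {}" using I J L(1) by (auto simp: H_def)
  have "c i \<le> c j" if "i \<in> I" "j \<in> J" for i j
    using that I J L(3) unfolding H_def by blast
  then have "sum (exchange I J d e c) {..<k} = sum c {..<k}"
    "(\<Sum>i<k. (c i)\<^sup>2) < (\<Sum>i<k. (exchange I J d e c i)\<^sup>2)"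
    using exchange_sum_sum_squares[of "{..<k}" I J e d c] IJ I(2) J(2) d(1) e(1) by simp_all
  moreover have lowered: "c i - int d \<in> A" if "i \<in> I" for i
    using that I(1) IJ(1) D by fastforce
  have raised: "c i + int e \<in> A" if "i \<in> J" for i
    using that J(1) IJ(2) U by fastforce
  have "exchange I J d e c i \<in> A" if "i < k" for i
    using c[OF that] lowered raised by (simp add: exchange_def)
  ultimately show ?thesis by blast
qed

lemma nfold_Suc_subset:
  assumes "2 * b\<^sup>2 \<le> k"
  shows "nfold (Suc k) A \<subseteq> msum {lo, hi} (nfold k A)"
proof
  fix x assume "x \<in> nfold (Suc k) A"
  define rep where "rep c \<longleftrightarrow> (\<forall>i<Suc k. c i \<in> A) \<and> (\<Sum>i<Suc k. c i) = x" for c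
  define defect where "defect c = nat (int (Suc k) * (lo\<^sup>2 + hi\<^sup>2) - (\<Sum>i<Suc k. (c i)\<^sup>2))"
    for c :: "nat \<Rightarrow> int"
  obtain c0 where "rep c0"
    using nfold_obtain_sum[OF \<open>x \<in> nfold (Suc k) A\<close>] by (metis rep_def)
  then obtain c where c: "rep c" and least: "\<And>c'. rep c' \<Longrightarrow> defect c \<le> defect c'"
    using ex_has_least_nat[of rep c0 defect] by blast
  have "\<exists>j<Suc k. c j \<in> {lo, hi}"
  proof (rule ccontr)
    assume "\<not> ?thesis"
    then obtain c' where c': "rep c'" "(\<Sum>i<Suc k. (c i)\<^sup>2) < (\<Sum>i<Suc k. (c' i)\<^sup>2)"
      using ex_same_sum_larger_sum_squares[of "Suc k" c] assms c unfolding rep_def by auto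
    have "(c' i)\<^sup>2 \<le> lo\<^sup>2 + hi\<^sup>2" if "i < Suc k" for i
      using c'(1) that subset_bounds square_le_sum_squares_bounds unfolding rep_def by fastforce
    then have "(\<Sum>i<Suc k. (c' i)\<^sup>2) \<le> int (Suc k) * (lo\<^sup>2 + hi\<^sup>2)"
      using sum_mono[of "{..<Suc k}" "\<lambda>i. (c' i)\<^sup>2" "\<lambda>_. lo\<^sup>2 + hi\<^sup>2"] by simp
    then have "defect c' < defect c" using c'(2) unfolding defect_def by linarith
    then show False using least[OF c'(1)] by simp
  qed
  then obtain j where j: "j < Suc k" "c j \<in> {lo, hi}" by blast
  have "x = sum c {..<Suc k}" using c unfolding rep_def by simp
  also have "\<dots> = c j + sum c ({..<Suc k} - {j})" using j(1) by (intro sum.remove) auto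
  finally have "x = c j + sum c ({..<Suc k} - {j})" .
  moreover have "sum c ({..<Suc k} - {j}) \<in> nfold k A"
    using sum_in_nfold[of "{..<Suc k} - {j}" c A] c j(1) unfolding rep_def by simp
  ultimately show "x \<in> msum {lo, hi} (nfold k A)"
    using j(2) unfolding msum_def by blast
qed

lemma nfold_subset_extremes: "nfold (t + 2 * b\<^sup>2) A \<subseteq> msum (nfold t {lo, hi}) (nfold (2 * b\<^sup>2) A)"
proof (induction t)
  case 0
  then show ?case by simp
next
  case (Suc t)
  have "nfold (Suc t + 2 * b\<^sup>2) A \<subseteq> msum {lo, hi} (nfold (t + 2 * b\<^sup>2) A)"
    using nfold_Suc_subset[of "t + 2 * b\<^sup>2"] by simp
  also have "\<dots> \<subseteq> msum {lo, hi} (msum (nfold t {lo, hi}) (nfold (2 * b\<^sup>2) A))"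
    using Suc.IH by (intro msum_mono) auto
  also have "\<dots> = msum (nfold (Suc t) {lo, hi}) (nfold (2 * b\<^sup>2) A)"
    by (simp add: msum_assoc)
  finally show ?case .
qed

lemma nfold_eq_extremes:
  assumes "lo \<in> A" "hi \<in> A"
  shows "nfold (t + 2 * b\<^sup>2) A = msum (nfold t {lo, hi}) (nfold (2 * b\<^sup>2) A)"
proof
  have "msum (nfold t {lo, hi}) (nfold (2 * b\<^sup>2) A) \<subseteq> msum (nfold t A) (nfold (2 * b\<^sup>2) A)"
    using assms by (intro msum_mono nfold_mono) auto
  then show "msum (nfold t {lo, hi}) (nfold (2 * b\<^sup>2) A) \<subseteq> nfold (t + 2 * b\<^sup>2) A"
    by (simp add: nfold_add)
qed (rule nfold_subset_extremes)

end

lemma bounded_gaps_increasing: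
  fixes a :: "nat \<Rightarrow> int"
  assumes incr: "\<And>i. 1 \<le> i \<Longrightarrow> i < l \<Longrightarrow> a i < a (Suc i)"
    and gap: "\<And>i. 1 \<le> i \<Longrightarrow> i < l \<Longrightarrow> a (Suc i) - a i \<le> int b"
  shows "bounded_gaps (a ` {1..l}) (a 1) (a l) b"
proof
  have mono: "a i \<le> a j" if "1 \<le> i" "i \<le> j" "j \<le> l" for i j
    using that(2,3)
  proof (induction j rule: dec_induct)
    case (step j)
    then show ?case using incr[of j] that(1) by simp
  qed simp
  then show "a ` {1..l} \<subseteq> {a 1..a l}" by auto
next
  fix u assume "u \<in> a ` {1..l}" "u \<noteq> a 1"
  then obtain i where "1 < i" "i \<le> l" "u = a i"
    by (auto simp: le_less)
  then have "1 \<le> i - 1" "i - 1 < l" "u = a (Suc (i - 1))" by auto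
  then show "\<exists>v\<in>a ` {1..l}. v < u \<and> u - v \<le> int b"
    using incr[of "i - 1"] gap[of "i - 1"] by (intro bexI[of _ "a (i - 1)"]) auto
next
  fix u assume u: "u \<in> a ` {1..l}" "u \<noteq> a l"
  then obtain j where "1 \<le> j" "j \<le> l" "u = a j" by auto
  moreover from this u(2) have "j < l" using le_neq_implies_less by blast
  ultimately show "\<exists>v\<in>a ` {1..l}. u < v \<and> v - u \<le> int b"
    using incr[of j] gap[of j] by (intro bexI[of _ "a (Suc j)"]) auto
qed

theorem mainTheorem1:
  fixes b l n :: nat and a :: "nat \<Rightarrow> int"
  assumes "b \<ge> 1" and "l \<ge> 1"
    and "\<And>i. 1 \<le> i \<Longrightarrow> i < l \<Longrightarrow> a i < a (Suc i)"
    and "\<And>i. 1 \<le> i \<Longrightarrow> i < l \<Longrightarrow> a (Suc i) - a i \<le> int b"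
    and "n > 2 * b^2"
  shows "nfold n (a ` {1..l}) =
         msum (nfold (n - 2 * b^2) {a 1, a l}) (nfold (2 * b^2) (a ` {1..l}))"
proof -
  interpret bounded_gaps "a ` {1..l}" "a 1" "a l" b
    by (rule bounded_gaps_increasing) (use assms(3,4) in auto)
  have "a 1 \<in> a ` {1..l}" "a l \<in> a ` {1..l}" using assms(2) by auto
  then show ?thesis
    using nfold_eq_extremes[of "n - 2 * b^2"] assms(5) by simp
qed

end
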